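(* Let $A=\{0,1\}$, $n\ge 1$, and let $\rho\subseteq A^n$ with $\rho\neq A^n$. Then $\rho$ is a key relation if and only if there exist linear equations $L_1,\dots,L_m$ ($m\ge 1$), each of the form $c_1x_1+\dots+c_nx_n=c_0$ with $c_0,\dots,c_n\in\{0,1\}$ and addition modulo $2$, such that $\rho=\{(x_1,\dots,x_n)\in A^n : \text{at least one of } L_1,\dots,L_m \text{ holds}\}$, i.e. $\rho(x_1,\dots,x_n)=L_1\vee\dots\vee L_m$.
   Context: A relation of arity $n$ on a finite set $A$ is a subset $\rho\subseteq A^n$. A unary vector-function is a tuple $\Psi=(\psi_1,\dots,\psi_n)$ of maps $\psi_i:A\to A$, acting on tuples coordinatewise: $\Psi(a_1,\dots,a_n)=(\psi_1(a_1),\dots,\psi_n(a_n))$; $\Psi$ preserves $\rho$ if $\Psi(\alpha)\in\rho$ for all $\alpha\in\rho$. A relation $\rho\subseteq A^n$ is a key relation if there is a tuple $\beta\in A^n\setminus\rho$ (called a key tuple for $\rho$) such that for every $\alpha\in A^n\setminus\rho$ there exists a unary vector-function $\Psi$ preserving $\rho$ with $\Psi(\alpha)=\beta$. *)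

theory Defs
  imports Main
begin

definition tuples :: "'a set \<Rightarrow> nat \<Rightarrow> 'a list set" where
  "tuples A n = {xs. length xs = n \<and> set xs \<subseteq> A}"

definition is_vector_fun :: "'a set \<Rightarrow> nat \<Rightarrow> ('a \<Rightarrow> 'a) list \<Rightarrow> bool" where
  "is_vector_fun A n Psi \<longleftrightarrow> length Psi = n \<and> (\<forall>f\<in>set Psi. f ` A \<subseteq> A)"

definition vf_apply :: "('a \<Rightarrow> 'a) list \<Rightarrow> 'a list \<Rightarrow> 'a list" where
  "vf_apply Psi xs = map2 (\<lambda>f x. f x) Psi xs"

definition vf_preserves :: "('a \<Rightarrow> 'a) list \<Rightarrow> 'a list set \<Rightarrow> bool" where
  "vf_preserves Psi \<rho> \<longleftrightarrow> (\<forall>\<alpha>\<in>\<rho>. vf_apply Psi \<alpha> \<in> \<rho>)"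

definition key_tuple :: "'a set \<Rightarrow> nat \<Rightarrow> 'a list set \<Rightarrow> 'a list \<Rightarrow> bool" where
  "key_tuple A n \<rho> \<beta> \<longleftrightarrow> \<beta> \<in> tuples A n - \<rho> \<and>
     (\<forall>\<alpha>\<in>tuples A n - \<rho>. \<exists>Psi. is_vector_fun A n Psi \<and> vf_preserves Psi \<rho> \<and> vf_apply Psi \<alpha> = \<beta>)"

definition key_relation :: "'a set \<Rightarrow> nat \<Rightarrow> 'a list set \<Rightarrow> bool" where
  "key_relation A n \<rho> \<longleftrightarrow> \<rho> \<subseteq> tuples A n \<and> (\<exists>\<beta>. key_tuple A n \<rho> \<beta>)"

text \<open>A linear equation c_1 x_1 + ... + c_n x_n = c_0 over Z/2, given as (coefficient list, c_0).\<close>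
definition lin_eq_wf :: "nat \<Rightarrow> nat list \<times> nat \<Rightarrow> bool" where
  "lin_eq_wf n L \<longleftrightarrow> length (fst L) = n \<and> set (fst L) \<subseteq> {0,1} \<and> snd L \<in> {0,1}"

definition lin_eq_holds :: "nat list \<times> nat \<Rightarrow> nat list \<Rightarrow> bool" where
  "lin_eq_holds L x \<longleftrightarrow> (\<Sum>i<length x. fst L ! i * x ! i) mod 2 = snd L"

end

theory Submission
  imports Defs
begin

text \<open>A key tuple beta forces the complement of rho to be closed under (x, alpha) \<mapsto> x + alpha + beta
  (addition modulo 2): each coordinate of a vector-function sending alpha to beta is constant or a
  translation, so preimages of beta can be pulled back until x + alpha + beta is reached. Hence the
  complement is a coset beta + V of a subspace V of GF(2)^n, and separating points from V by
  orthogonal vectors c writes it as the conjunction of the equations c x = c beta; rho is the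
  disjunction of their negations c x = 1 - c beta. Conversely, if rho is such a disjunction, the
  translation by alpha + beta preserves rho and sends alpha to beta, because alpha and beta violate
  every equation.\<close>

definition dot :: "nat list \<Rightarrow> nat list \<Rightarrow> nat" where
  "dot c x = (\<Sum>i<length x. c ! i * x ! i) mod 2"

definition vadd :: "nat list \<Rightarrow> nat list \<Rightarrow> nat list" where
  "vadd x y = map2 (\<lambda>a b. (a + b) mod 2) x y"

definition gf2_subspace :: "nat \<Rightarrow> nat list set \<Rightarrow> bool" where
  "gf2_subspace n V \<longleftrightarrow>
     V \<subseteq> tuples {0,1} n \<and> replicate n 0 \<in> V \<and> (\<forall>u\<in>V. \<forall>v\<in>V. vadd u v \<in> V)"

lemma length_tuples: "x \<in> tuples A n \<Longrightarrow> length x = n"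
  by (simp add: tuples_def)

lemma tuples_nth: "x \<in> tuples A n \<Longrightarrow> i < n \<Longrightarrow> x ! i \<in> A"
  by (auto simp: tuples_def)

lemma tuplesI: "length x = n \<Longrightarrow> (\<And>i. i < n \<Longrightarrow> x ! i \<in> A) \<Longrightarrow> x \<in> tuples A n"
  by (auto simp: tuples_def in_set_conv_nth)

lemma Cons_tuples_Suc [simp]: "a # x \<in> tuples A (Suc n) \<longleftrightarrow> a \<in> A \<and> x \<in> tuples A n"
  by (auto simp: tuples_def)

lemma tuples_SucE:
  assumes "x \<in> tuples A (Suc n)"
  obtains a y where "x = a # y" "a \<in> A" "y \<in> tuples A n"
  using assms by (cases x) (auto simp: tuples_def)

lemma replicate_tuples: "a \<in> A \<Longrightarrow> replicate n a \<in> tuples A n"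
  by (auto simp: tuples_def)

lemma finite_tuples: "finite A \<Longrightarrow> finite (tuples A n)"
  unfolding tuples_def using finite_lists_length_eq[of A n] by (simp add: conj_commute)

lemma length_vadd [simp]: "length (vadd x y) = min (length x) (length y)"
  by (simp add: vadd_def)

lemma nth_vadd [simp]:
  "i < length x \<Longrightarrow> i < length y \<Longrightarrow> vadd x y ! i = (x ! i + y ! i) mod 2"
  by (simp add: vadd_def)

lemma vadd_Cons [simp]: "vadd (a # x) (b # y) = (a + b) mod 2 # vadd x y"
  by (simp add: vadd_def)

lemma vadd_commute: "vadd x y = vadd y x"
  by (rule nth_equalityI) (auto simp: add.commute)

lemma vadd_assoc: "vadd (vadd x y) z = vadd x (vadd y z)"
  by (rule nth_equalityI) (auto simp: mod_add_left_eq mod_add_right_eq add.assoc)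

lemma vadd_self: "vadd x x = replicate (length x) 0"
  by (rule nth_equalityI) auto

lemma vadd_replicate_zero: "x \<in> tuples {0,1} n \<Longrightarrow> vadd x (replicate n 0) = x"
  by (rule nth_equalityI) (auto simp: length_tuples dest: tuples_nth)

lemma vadd_vadd_cancel: "x \<in> tuples {0,1} n \<Longrightarrow> length y = n \<Longrightarrow> vadd (vadd x y) y = x"
  by (simp add: vadd_assoc vadd_self vadd_replicate_zero)

lemma vadd_tuples: "x \<in> tuples A n \<Longrightarrow> y \<in> tuples A n \<Longrightarrow> vadd x y \<in> tuples {0,1} n"
  by (rule tuplesI) (auto simp: length_tuples)

lemma dot_less_2: "dot c x < 2"
  by (simp add: dot_def)

lemma dot_Cons [simp]: "dot (a # c) (b # x) = (a * b + dot c x) mod 2"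
  unfolding dot_def length_Cons sum.lessThan_Suc_shift by (simp add: mod_add_right_eq)

lemma dot_replicate_zero: "length x \<le> n \<Longrightarrow> dot (replicate n 0) x = 0"
  by (simp add: dot_def)

lemma dot_vadd:
  assumes "length x = length y"
  shows "dot c (vadd x y) = (dot c x + dot c y) mod 2"
proof -
  let ?n = "length x"
  have "dot c (vadd x y) = (\<Sum>i<?n. c ! i * ((x ! i + y ! i) mod 2)) mod 2"
    using assms by (simp add: dot_def)
  also have "\<dots> = (\<Sum>i<?n. c ! i * ((x ! i + y ! i) mod 2) mod 2) mod 2"
    by (simp add: mod_sum_eq)
  also have "\<dots> = (\<Sum>i<?n. (c ! i * x ! i + c ! i * y ! i) mod 2) mod 2"
    by (simp add: mod_mult_right_eq distrib_left)
  also have "\<dots> = (\<Sum>i<?n. c ! i * x ! i + c ! i * y ! i) mod 2"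
    by (simp add: mod_sum_eq)
  also have "\<dots> = (dot c x + dot c y) mod 2"
    using assms by (simp add: dot_def sum.distrib mod_add_eq)
  finally show ?thesis .
qed

lemma lin_eq_holds_iff_dot: "lin_eq_holds L x \<longleftrightarrow> dot (fst L) x = snd L"
  by (simp add: lin_eq_holds_def dot_def)

lemma gf2_subspace_tail:
  assumes "gf2_subspace (Suc n) V"
  shows "gf2_subspace n (tl ` {v \<in> V. hd v = 0})"
  unfolding gf2_subspace_def
proof (intro conjI ballI)
  have V: "V \<subseteq> tuples {0,1} (Suc n)" "replicate (Suc n) 0 \<in> V"
    and closed: "\<And>u v. u \<in> V \<Longrightarrow> v \<in> V \<Longrightarrow> vadd u v \<in> V"
    using assms by (auto simp: gf2_subspace_def)
  show "tl ` {v \<in> V. hd v = 0} \<subseteq> tuples {0,1} n"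
    using V(1) by (force elim: tuples_SucE)
  show "replicate n 0 \<in> tl ` {v \<in> V. hd v = 0}"
    using V(2) by (force intro: image_eqI[where x = "replicate (Suc n) 0"])
  fix u v assume "u \<in> tl ` {v \<in> V. hd v = 0}" "v \<in> tl ` {v \<in> V. hd v = 0}"
  then obtain u' v' where "0 # u' \<in> V" "0 # v' \<in> V" "u = u'" "v = v'"
    using V(1) by (force elim: tuples_SucE)
  then have "0 # vadd u v \<in> V"
    using closed by fastforce
  then show "vadd u v \<in> tl ` {v \<in> V. hd v = 0}"
    by (force intro: image_eqI[where x = "0 # vadd u v"])
qed

lemma dot_eq_if_vadd_orthogonal:
  assumes "\<forall>v\<in>V. dot c v = 0" "vadd y z \<in> V" "length y = length z"
  shows "dot c y = dot c z"
proof -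
  have "(dot c y + dot c z) mod 2 = 0"
    using assms dot_vadd[of y z c] by simp
  then show ?thesis
    using dot_less_2[of c y] dot_less_2[of c z] by (auto simp: less_2_cases_iff)
qed

text \<open>The head coefficient is dot c w if some 1 # w lies in V, and 0 otherwise.\<close>
lemma gf2_subspace_extend_orthogonal:
  assumes "gf2_subspace (Suc n) V" and orth: "\<forall>v\<in>tl ` {v \<in> V. hd v = 0}. dot c v = 0"
  shows "\<exists>h\<in>{0,1}. \<forall>v\<in>V. dot (h # c) v = 0"
proof -
  have V: "V \<subseteq> tuples {0,1} (Suc n)"
    and closed: "\<And>u v. u \<in> V \<Longrightarrow> v \<in> V \<Longrightarrow> vadd u v \<in> V"
    using assms by (auto simp: gf2_subspace_def)
  have orth0: "dot c x = 0" if "0 # x \<in> V" for x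
    using orth that by (metis (mono_tags) image_eqI list.sel(1,3) mem_Collect_eq)
  have split: "\<exists>b x. v = b # x \<and> (b = 0 \<or> b = 1) \<and> x \<in> tuples {0,1} n" if "v \<in> V" for v
    using V that by (blast elim: tuples_SucE)
  show ?thesis
  proof (cases "\<exists>w. 1 # w \<in> V")
    case False
    have "dot (0 # c) v = 0" if "v \<in> V" for v
      using split[OF that] False orth0 that by auto
    then show ?thesis by blast
  next
    case True
    then obtain w where w: "1 # w \<in> V" by blast
    then have "length w = n"
      using V by (auto simp: length_tuples)
    have "dot (dot c w # c) v = 0" if vV: "v \<in> V" for v
    proof -
      obtain b x where v: "v = b # x" "b = 0 \<or> b = 1" "x \<in> tuples {0,1} n"
        using split[OF vV] by blast
      show ?thesis
      proof (cases "b = 0")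
        case True
        then show ?thesis using orth0 v vV by simp
      next
        case False
        then have "vadd v (1 # w) = 0 # vadd x w"
          using v by simp
        then have "dot c (vadd x w) = 0"
          using closed[OF vV w] orth0 by simp
        then show ?thesis
          using dot_vadd[of x w c] False v \<open>length w = n\<close> by (auto simp: length_tuples add.commute)
      qed
    qed
    moreover have "dot c w \<in> {0,1}"
      using dot_less_2[of c w] by (auto simp: less_2_cases_iff)
    ultimately show ?thesis by blast
  qed
qed

lemma gf2_subspace_reduce_head:
  assumes "gf2_subspace (Suc n) V" and y: "a # y \<in> tuples {0,1} (Suc n)" "a # y \<notin> V"
    and "a = 0 \<or> (\<exists>w. 1 # w \<in> V)"
  obtains z where "0 # z \<notin> V" "z \<in> tuples {0,1} n" "vadd (a # y) (0 # z) \<in> V"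
proof (cases "a = 0")
  case True
  have "replicate (Suc n) 0 \<in> V"
    using assms(1) by (simp add: gf2_subspace_def)
  then show ?thesis
    using that[of y] True y by (simp add: vadd_self length_tuples)
next
  case False
  with assms(4) obtain w where w: "1 # w \<in> V" by blast
  have V: "V \<subseteq> tuples {0,1} (Suc n)"
    and closed: "\<And>u v. u \<in> V \<Longrightarrow> v \<in> V \<Longrightarrow> vadd u v \<in> V"
    using assms(1) by (auto simp: gf2_subspace_def)
  have "w \<in> tuples {0,1} n" "y \<in> tuples {0,1} n" "a = 1"
    using w V y(1) False by auto
  then have "vadd (vadd y w) w = y" "vadd y (vadd y w) = w"
    using vadd_vadd_cancel[of w n y] vadd_vadd_cancel[of y n w]
    by (simp_all add: length_tuples vadd_commute vadd_assoc)
  then have "vadd (0 # vadd y w) (1 # w) = a # y" "vadd (a # y) (0 # vadd y w) = 1 # w"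
    using \<open>a = 1\<close> by simp_all
  then have "0 # vadd y w \<notin> V" "vadd (a # y) (0 # vadd y w) \<in> V"
    using closed[OF _ w, of "0 # vadd y w"] y(2) w by metis+
  then show ?thesis
    using that vadd_tuples[OF \<open>y \<in> _\<close> \<open>w \<in> _\<close>] by blast
qed

lemma gf2_subspace_separation:
  assumes "gf2_subspace n V" "y \<in> tuples {0,1} n" "y \<notin> V"
  shows "\<exists>c\<in>tuples {0,1} n. (\<forall>v\<in>V. dot c v = 0) \<and> dot c y = 1"
  using assms
proof (induction n arbitrary: V y)
  case 0
  then show ?case by (simp add: gf2_subspace_def tuples_def)
next
  case (Suc n)
  have V: "V \<subseteq> tuples {0,1} (Suc n)"
    using Suc.prems(1) by (simp add: gf2_subspace_def)
  obtain a y' where y: "y = a # y'" "a = 0 \<or> a = 1" "y' \<in> tuples {0,1} n"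
    using Suc.prems(2) by (blast elim: tuples_SucE)
  show ?case
  proof (cases "a = 1 \<and> (\<nexists>w. 1 # w \<in> V)")
    case True
    let ?c = "1 # replicate n 0"
    have "dot ?c v = 0" if "v \<in> V" for v
    proof -
      obtain b x where "v = b # x" "b = 0 \<or> b = 1" "x \<in> tuples {0,1} n"
        using V \<open>v \<in> V\<close> by (blast elim: tuples_SucE)
      then show ?thesis
        using True \<open>v \<in> V\<close> by (auto simp: dot_replicate_zero length_tuples)
    qed
    moreover have "dot ?c y = 1"
      using True y by (simp add: dot_replicate_zero length_tuples)
    moreover have "?c \<in> tuples {0,1} (Suc n)"
      by (simp add: replicate_tuples)
    ultimately show ?thesis by blast
  next
    case False
    then have "a = 0 \<or> (\<exists>w. 1 # w \<in> V)"
      using y(2) by blast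
    then obtain z where z: "0 # z \<notin> V" "z \<in> tuples {0,1} n" "vadd y (0 # z) \<in> V"
      using gf2_subspace_reduce_head[OF Suc.prems(1)] Suc.prems(2,3) unfolding y(1) by blast
    have "z \<notin> tl ` {v \<in> V. hd v = 0}"
      using z(1) V by (force elim: tuples_SucE)
    then obtain c where c: "c \<in> tuples {0,1} n" "\<forall>v\<in>tl ` {v \<in> V. hd v = 0}. dot c v = 0"
      "dot c z = 1"
      using Suc.IH[OF gf2_subspace_tail[OF Suc.prems(1)]] z(2) by blast
    obtain h where h: "h \<in> {0,1}" "\<forall>v\<in>V. dot (h # c) v = 0"
      using gf2_subspace_extend_orthogonal[OF Suc.prems(1) c(2)] by blast
    have "dot (h # c) y = dot (h # c) (0 # z)"
      using dot_eq_if_vadd_orthogonal[OF h(2) z(3)] z(2) Suc.prems(2) by (simp add: length_tuples)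
    then have "dot (h # c) y = 1"
      using c(3) by simp
    then show ?thesis
      using h c(1) by (intro bexI[where x = "h # c"]) auto
  qed
qed

lemma not_in_gf2_subspace_iff:
  assumes "gf2_subspace n V" "y \<in> tuples {0,1} n"
  shows "y \<notin> V \<longleftrightarrow> (\<exists>c\<in>tuples {0,1} n. (\<forall>v\<in>V. dot c v = 0) \<and> dot c y = 1)"
  using gf2_subspace_separation[OF assms] by auto

lemma dot_vadd_eq_1_iff:
  "length x = length y \<Longrightarrow> dot c (vadd x y) = 1 \<longleftrightarrow> dot c x = 1 - dot c y"
  using dot_vadd[of x y c] dot_less_2[of c x] dot_less_2[of c y] by (auto simp: less_2_cases_iff)

lemma coset_complement_lin_eq_disjunction:
  assumes V: "gf2_subspace n V" and \<beta>: "\<beta> \<in> tuples {0,1} n"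
  shows "\<exists>Ls. Ls \<noteq> [] \<and> (\<forall>L\<in>set Ls. lin_eq_wf n L) \<and>
    {x \<in> tuples {0,1} n. vadd x \<beta> \<notin> V} = {x \<in> tuples {0,1} n. \<exists>L\<in>set Ls. lin_eq_holds L x}"
proof -
  let ?T = "tuples {0::nat,1} n"
  let ?orth = "{c \<in> ?T. \<forall>v\<in>V. dot c v = 0}"
  have "finite ((\<lambda>c. (c, 1 - dot c \<beta>)) ` ?orth)"
    using finite_tuples[of "{0::nat,1}" n] by simp
  then obtain Ls where Ls: "set Ls = (\<lambda>c. (c, 1 - dot c \<beta>)) ` ?orth"
    by (meson finite_list)
  text \<open>The zero vector contributes the unsatisfiable equation 0 = 1, so Ls is never empty.\<close>
  have "replicate n 0 \<in> ?orth"
    using V by (auto simp: gf2_subspace_def replicate_tuples dot_replicate_zero length_tuples)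
  then have "Ls \<noteq> []"
    using Ls by auto
  moreover have "\<forall>L\<in>set Ls. lin_eq_wf n L"
    unfolding Ls by (auto simp: lin_eq_wf_def tuples_def)
  moreover have "vadd x \<beta> \<notin> V \<longleftrightarrow> (\<exists>L\<in>set Ls. lin_eq_holds L x)" if "x \<in> ?T" for x
  proof -
    have "length x = length \<beta>"
      using that \<beta> by (simp add: length_tuples)
    have "vadd x \<beta> \<in> ?T"
      using that \<beta> by (rule vadd_tuples)
    then have "vadd x \<beta> \<notin> V \<longleftrightarrow> (\<exists>c\<in>?T. (\<forall>v\<in>V. dot c v = 0) \<and> dot c (vadd x \<beta>) = 1)"
      by (rule not_in_gf2_subspace_iff[OF V])
    also have "\<dots> \<longleftrightarrow> (\<exists>c\<in>?orth. dot c x = 1 - dot c \<beta>)"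
      using dot_vadd_eq_1_iff[OF \<open>length x = length \<beta>\<close>] by auto
    also have "\<dots> \<longleftrightarrow> (\<exists>L\<in>set Ls. lin_eq_holds L x)"
      unfolding Ls lin_eq_holds_iff_dot by simp
    finally show ?thesis .
  qed
  then have "{x \<in> ?T. vadd x \<beta> \<notin> V} = {x \<in> ?T. \<exists>L\<in>set Ls. lin_eq_holds L x}"
    by auto
  ultimately show ?thesis
    by blast
qed

lemma bit_fun_cases:
  assumes "f ` {0,1} \<subseteq> {0::nat,1}" "a \<in> {0,1}" "t \<in> {0,1}"
  shows "f t = (if f 0 = f 1 then f a else (t + a + f a) mod 2)"
  using assms by auto

lemma length_vf_apply [simp]: "length (vf_apply Psi x) = min (length Psi) (length x)"
  by (simp add: vf_apply_def)

lemma nth_vf_apply [simp]: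
  "i < length Psi \<Longrightarrow> i < length x \<Longrightarrow> vf_apply Psi x ! i = (Psi ! i) (x ! i)"
  by (simp add: vf_apply_def)

lemma vf_apply_eqI:
  assumes "length Psi = n" "length x = n" "length y = n" "\<And>i. i < n \<Longrightarrow> (Psi ! i) (x ! i) = y ! i"
  shows "vf_apply Psi x = y"
  using assms by (intro nth_equalityI) auto

lemma vf_apply_tuples:
  assumes "is_vector_fun A n Psi" "x \<in> tuples A n"
  shows "vf_apply Psi x \<in> tuples A n"
proof (rule tuplesI)
  show "length (vf_apply Psi x) = n"
    using assms by (simp add: is_vector_fun_def length_tuples)
  fix i assume "i < n"
  then have "(Psi ! i) ` A \<subseteq> A" "x ! i \<in> A"
    using assms by (auto simp: is_vector_fun_def tuples_nth)
  moreover have "vf_apply Psi x ! i = (Psi ! i) (x ! i)"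
    using assms \<open>i < n\<close> by (simp add: is_vector_fun_def length_tuples)
  ultimately show "vf_apply Psi x ! i \<in> A"
    by blast
qed

lemma vf_preserves_nonmember: "vf_preserves Psi \<rho> \<Longrightarrow> vf_apply Psi x \<notin> \<rho> \<Longrightarrow> x \<notin> \<rho>"
  by (auto simp: vf_preserves_def)

lemma vector_fun_bit_coordinate:
  fixes Psi :: "(nat \<Rightarrow> nat) list"
  assumes "is_vector_fun {0,1} n Psi" "vf_apply Psi \<alpha> = \<beta>" "\<alpha> \<in> tuples {0,1} n"
    and "i < n" "t \<in> {0,1}"
  shows "(Psi ! i) t = (if (Psi ! i) 0 = (Psi ! i) 1 then \<beta> ! i else (t + \<alpha> ! i + \<beta> ! i) mod 2)"
proof -
  have "(Psi ! i) ` {0,1} \<subseteq> {0,1}"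
    using assms(1,4) by (simp add: is_vector_fun_def)
  moreover have "(Psi ! i) (\<alpha> ! i) = \<beta> ! i"
    using arg_cong[OF assms(2), of "\<lambda>y. y ! i"] assms(1,3,4)
    by (simp add: is_vector_fun_def length_tuples)
  ultimately show ?thesis
    using bit_fun_cases[of "Psi ! i" "\<alpha> ! i" t] tuples_nth[OF assms(3,4)] assms(5) by simp
qed

text \<open>On {0,1}, a map sending alpha_i to beta_i is either constant or t \<mapsto> t + alpha_i + beta_i.
  Pulling beta back along Psi and Phi through p, z and r reaches x + alpha + beta; each of these
  tuples lies outside rho because its image does.\<close>
lemma nonmember_vadd_closed:
  assumes x: "x \<in> tuples {0,1} n" and \<alpha>: "\<alpha> \<in> tuples {0,1} n"
    and \<beta>: "\<beta> \<in> tuples {0,1} n" "\<beta> \<notin> \<rho>"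
    and Psi: "is_vector_fun {0,1} n Psi" "vf_preserves Psi \<rho>" "vf_apply Psi \<alpha> = \<beta>"
    and Phi: "is_vector_fun {0,1} n Phi" "vf_preserves Phi \<rho>" "vf_apply Phi x = \<beta>"
  shows "vadd (vadd x \<alpha>) \<beta> \<notin> \<rho>"
proof -
  have len: "length Psi = n" "length Phi = n" "length x = n" "length \<alpha> = n" "length \<beta> = n"
    using Psi(1) Phi(1) x \<alpha> \<beta>(1) by (simp_all add: is_vector_fun_def length_tuples)
  have bits: "x ! i \<in> {0,1}" "\<alpha> ! i \<in> {0,1}" "\<beta> ! i \<in> {0,1}" if "i < n" for i
    using tuples_nth[OF x that] tuples_nth[OF \<alpha> that] tuples_nth[OF \<beta>(1) that] by blast+
  define C where "C i \<longleftrightarrow> (Psi ! i) 0 = (Psi ! i) 1" for i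
  have Psi_nth: "(Psi ! i) t = (if C i then \<beta> ! i else (t + \<alpha> ! i + \<beta> ! i) mod 2)"
    if "i < n" "t \<in> {0,1}" for i t
    using vector_fun_bit_coordinate[OF Psi(1) Psi(3) \<alpha> that] by (simp add: C_def)
  define p where "p = map (\<lambda>i. if C i then \<beta> ! i else \<alpha> ! i) [0..<n]"
  define r where "r = map (\<lambda>i. if C i then \<beta> ! i else x ! i) [0..<n]"
  define z where "z = vf_apply Phi r"
  have r: "r \<in> tuples {0,1} n"
  proof (rule tuplesI)
    fix i assume "i < n"
    then show "r ! i \<in> {0,1}"
      using bits[OF \<open>i < n\<close>] by (simp add: r_def)
  qed (simp add: r_def)
  have z: "z \<in> tuples {0,1} n"
    unfolding z_def using Phi(1) r by (rule vf_apply_tuples)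
  have "vf_apply Psi p = \<beta>"
  proof (rule vf_apply_eqI[OF len(1)])
    fix i assume i: "i < n"
    have "p ! i = (if C i then \<beta> ! i else \<alpha> ! i)"
      using i by (simp add: p_def)
    moreover from this have "p ! i \<in> {0,1}"
      using bits[OF i] by simp
    ultimately show "(Psi ! i) (p ! i) = \<beta> ! i"
      using Psi_nth[OF i \<open>p ! i \<in> {0,1}\<close>] bits[OF i] by (cases "C i") auto
  qed (simp_all add: p_def len)
  then have "p \<notin> \<rho>"
    using vf_preserves_nonmember[OF Psi(2), of p] \<beta>(2) by simp
  have "vf_apply Psi z = p"
  proof (rule vf_apply_eqI[OF len(1)])
    fix i assume i: "i < n"
    have "z ! i \<in> {0,1}"
      using tuples_nth[OF z i] .
    moreover have "\<not> C i \<Longrightarrow> z ! i = \<beta> ! i"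
      using arg_cong[OF Phi(3), of "\<lambda>y. y ! i"] i len by (simp add: z_def r_def)
    moreover have "p ! i = (if C i then \<beta> ! i else \<alpha> ! i)"
      using i by (simp add: p_def)
    ultimately show "(Psi ! i) (z ! i) = p ! i"
      using Psi_nth[OF i \<open>z ! i \<in> {0,1}\<close>] bits[OF i] by (cases "C i") auto
  qed (use z in \<open>simp_all add: p_def length_tuples\<close>)
  then have "r \<notin> \<rho>"
    using vf_preserves_nonmember[OF Psi(2), of z] vf_preserves_nonmember[OF Phi(2), of r] \<open>p \<notin> \<rho>\<close>
    by (simp add: z_def)
  have "vf_apply Psi (vadd (vadd x \<alpha>) \<beta>) = r"
  proof (rule vf_apply_eqI[OF len(1)])
    fix i assume i: "i < n"
    have "vadd (vadd x \<alpha>) \<beta> ! i = ((x ! i + \<alpha> ! i) mod 2 + \<beta> ! i) mod 2"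
      using i len by simp
    moreover from this have "vadd (vadd x \<alpha>) \<beta> ! i \<in> {0,1}"
      by (simp; presburger)
    moreover have "r ! i = (if C i then \<beta> ! i else x ! i)"
      using i by (simp add: r_def)
    ultimately show "(Psi ! i) (vadd (vadd x \<alpha>) \<beta> ! i) = r ! i"
      using Psi_nth[OF i \<open>vadd (vadd x \<alpha>) \<beta> ! i \<in> {0,1}\<close>] bits[OF i]
      by (cases "C i") auto
  qed (simp_all add: r_def len)
  then show ?thesis
    using vf_preserves_nonmember[OF Psi(2), of "vadd (vadd x \<alpha>) \<beta>"] \<open>r \<notin> \<rho>\<close> by simp
qed

lemma mod_2_translate_twice:
  "(((a + c) mod 2 + (b + c) mod 2) mod 2 + c) mod 2 = ((a + b) mod 2 + c) mod (2::nat)"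
  by (cases "even a"; cases "even b"; cases "even c") (auto simp: mod2_eq_if)

lemma vadd_translate_twice: "vadd (vadd (vadd u b) (vadd v b)) b = vadd (vadd u v) b"
  by (rule nth_equalityI) (simp_all add: mod_2_translate_twice)

lemma key_tuple_gf2_subspace:
  assumes "key_tuple {0,1} n \<rho> \<beta>"
  shows "gf2_subspace n {v \<in> tuples {0,1} n. vadd v \<beta> \<notin> \<rho>}"
proof -
  let ?T = "tuples {0::nat,1} n"
  have \<beta>: "\<beta> \<in> ?T" "\<beta> \<notin> \<rho>"
    using assms by (auto simp: key_tuple_def)
  have closed: "vadd (vadd x \<alpha>) \<beta> \<notin> \<rho>" if x: "x \<in> ?T - \<rho>" and \<alpha>: "\<alpha> \<in> ?T - \<rho>" for x \<alpha>
  proof -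
    obtain Psi where "is_vector_fun {0,1} n Psi" "vf_preserves Psi \<rho>" "vf_apply Psi \<alpha> = \<beta>"
      using assms \<alpha> unfolding key_tuple_def by blast
    moreover obtain Phi where "is_vector_fun {0,1} n Phi" "vf_preserves Phi \<rho>" "vf_apply Phi x = \<beta>"
      using assms x unfolding key_tuple_def by blast
    ultimately show ?thesis
      using nonmember_vadd_closed[of x n \<alpha> \<beta> \<rho>] x \<alpha> \<beta> by blast
  qed
  have "vadd (replicate n 0) \<beta> = \<beta>"
    using vadd_replicate_zero[OF \<beta>(1)] by (simp add: vadd_commute)
  moreover have "vadd (vadd u v) \<beta> \<notin> \<rho>"
    if "u \<in> ?T" "vadd u \<beta> \<notin> \<rho>" "v \<in> ?T" "vadd v \<beta> \<notin> \<rho>" for u v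
    using closed[of "vadd u \<beta>" "vadd v \<beta>"] that vadd_tuples[OF that(1) \<beta>(1)]
      vadd_tuples[OF that(3) \<beta>(1)]
    by (simp add: vadd_translate_twice)
  moreover have "vadd u v \<in> ?T" if "u \<in> ?T" "v \<in> ?T" for u v
    using that by (rule vadd_tuples)
  ultimately show ?thesis
    using \<beta> by (auto simp: gf2_subspace_def replicate_tuples)
qed

definition translation :: "nat list \<Rightarrow> (nat \<Rightarrow> nat) list" where
  "translation d = map (\<lambda>i a. (a + d ! i) mod 2) [0..<length d]"

lemma is_vector_fun_translation: "length d = n \<Longrightarrow> is_vector_fun {0,1} n (translation d)"
  by (auto simp: is_vector_fun_def translation_def)

lemma vf_apply_translation: "length x = length d \<Longrightarrow> vf_apply (translation d) x = vadd x d"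
  by (rule vf_apply_eqI[where n = "length d"]) (auto simp: translation_def)

lemma lin_eq_holds_vadd_nonsolutions:
  assumes "lin_eq_wf n L" "length x = n" "length y = n" "length z = n"
    and "lin_eq_holds L x" "\<not> lin_eq_holds L y" "\<not> lin_eq_holds L z"
  shows "lin_eq_holds L (vadd x (vadd y z))"
proof -
  obtain c e where L: "L = (c, e)" "e = 0 \<or> e = 1"
    using assms(1) by (cases L) (auto simp: lin_eq_wf_def)
  then have "dot c x = e" "dot c y = 1 - e" "dot c z = 1 - e"
    using assms(5-7) dot_less_2[of c y] dot_less_2[of c z]
    by (auto simp: lin_eq_holds_iff_dot less_2_cases_iff)
  then have "dot c (vadd x (vadd y z)) = e"
    using assms(2-4) L(2) by (auto simp: dot_vadd)
  then show ?thesis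
    using L(1) by (simp add: lin_eq_holds_iff_dot)
qed

lemma lin_eq_disjunction_key_tuple:
  assumes wf: "\<forall>L\<in>set Ls. lin_eq_wf n L"
    and \<rho>: "\<rho> = {x \<in> tuples {0,1} n. \<exists>L\<in>set Ls. lin_eq_holds L x}"
    and \<beta>: "\<beta> \<in> tuples {0,1} n" "\<beta> \<notin> \<rho>"
  shows "key_tuple {0,1} n \<rho> \<beta>"
  unfolding key_tuple_def
proof (intro conjI ballI)
  show "\<beta> \<in> tuples {0,1} n - \<rho>"
    using \<beta> by blast
  fix \<alpha> assume \<alpha>: "\<alpha> \<in> tuples {0,1} n - \<rho>"
  let ?Psi = "translation (vadd \<alpha> \<beta>)"
  have len: "length \<alpha> = n" "length \<beta> = n"
    using \<alpha> \<beta> by (auto simp: length_tuples)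
  have "vf_apply ?Psi x \<in> \<rho>" if x: "x \<in> \<rho>" for x
  proof -
    obtain L where L: "L \<in> set Ls" "lin_eq_holds L x" and xT: "x \<in> tuples {0,1} n"
      using x \<rho> by blast
    moreover have "\<not> lin_eq_holds L \<alpha>" "\<not> lin_eq_holds L \<beta>"
      using L(1) \<alpha> \<beta> \<rho> by auto
    ultimately have "lin_eq_holds L (vadd x (vadd \<alpha> \<beta>))"
      using lin_eq_holds_vadd_nonsolutions[of n L x \<alpha> \<beta>] wf length_tuples[OF xT] len by blast
    moreover have "vadd x (vadd \<alpha> \<beta>) \<in> tuples {0,1} n"
      using xT vadd_tuples[of \<alpha> _ n \<beta>] \<alpha> \<beta>(1) by (blast intro: vadd_tuples)
    ultimately have "vadd x (vadd \<alpha> \<beta>) \<in> \<rho>"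
      using L(1) \<rho> by blast
    then show ?thesis
      using xT len by (simp add: vf_apply_translation length_tuples)
  qed
  moreover have "vf_apply ?Psi \<alpha> = \<beta>"
    using vadd_vadd_cancel[of \<beta> n \<alpha>] \<beta>(1) len
    by (simp add: vf_apply_translation vadd_commute vadd_assoc)
  ultimately show "\<exists>Psi. is_vector_fun {0,1} n Psi \<and> vf_preserves Psi \<rho> \<and> vf_apply Psi \<alpha> = \<beta>"
    using is_vector_fun_translation[of "vadd \<alpha> \<beta>" n] len by (auto simp: vf_preserves_def)
qed

theorem mainTheorem1:
  fixes n :: nat and \<rho> :: "nat list set"
  assumes "n \<ge> 1"
    and "\<rho> \<subseteq> tuples {0,1} n"
    and "\<rho> \<noteq> tuples {0,1} n"
  shows "key_relation {0,1} n \<rho> \<longleftrightarrow>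
    (\<exists>Ls :: (nat list \<times> nat) list. Ls \<noteq> [] \<and> (\<forall>L\<in>set Ls. lin_eq_wf n L) \<and>
       \<rho> = {x \<in> tuples {0,1} n. \<exists>L\<in>set Ls. lin_eq_holds L x})"
proof
  assume "key_relation {0,1} n \<rho>"
  then obtain \<beta> where key: "key_tuple {0,1} n \<rho> \<beta>"
    by (auto simp: key_relation_def)
  then have \<beta>: "\<beta> \<in> tuples {0,1} n"
    by (simp add: key_tuple_def)
  let ?V = "{v \<in> tuples {0,1} n. vadd v \<beta> \<notin> \<rho>}"
  have "x \<in> \<rho> \<longleftrightarrow> vadd x \<beta> \<notin> ?V" if "x \<in> tuples {0,1} n" for x
    using vadd_tuples[OF that \<beta>] vadd_vadd_cancel[OF that] \<beta> by (simp add: length_tuples)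
  then have "\<rho> = {x \<in> tuples {0,1} n. vadd x \<beta> \<notin> ?V}"
    using assms(2) by blast
  then show "\<exists>Ls. Ls \<noteq> [] \<and> (\<forall>L\<in>set Ls. lin_eq_wf n L) \<and>
      \<rho> = {x \<in> tuples {0,1} n. \<exists>L\<in>set Ls. lin_eq_holds L x}"
    using coset_complement_lin_eq_disjunction[OF key_tuple_gf2_subspace[OF key] \<beta>] by simp
next
  assume "\<exists>Ls. Ls \<noteq> [] \<and> (\<forall>L\<in>set Ls. lin_eq_wf n L) \<and>
      \<rho> = {x \<in> tuples {0,1} n. \<exists>L\<in>set Ls. lin_eq_holds L x}"
  then obtain Ls where "\<forall>L\<in>set Ls. lin_eq_wf n L"
      "\<rho> = {x \<in> tuples {0,1} n. \<exists>L\<in>set Ls. lin_eq_holds L x}"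
    by blast
  moreover obtain \<beta> where "\<beta> \<in> tuples {0,1} n" "\<beta> \<notin> \<rho>"
    using assms(2,3) by blast
  ultimately have "key_tuple {0,1} n \<rho> \<beta>"
    by (rule lin_eq_disjunction_key_tuple)
  then show "key_relation {0,1} n \<rho>"
    using assms(2) unfolding key_relation_def by blast
qed

end
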